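(* Let $\psi$ be a difference-of-ratios (DoR) fairness property, let $\pi$ be a Static-Fair shield with period $T$, and let $\tau=\tau_1\cdots\tau_m\in\mathtt{FT}^{mT}_{\theta,\pi}$ with $|\tau_i|=T$ for all $i\le m$. If $\mathtt{den}^g(\tau_i)=\mathtt{den}^g(\tau_j)$ for all $i,j\le m$ and $g\in\{a,b\}$, then $\psi(\tau)\le\kappa$.
   Context: Input space $\mathcal{X}=\{a,b\}\times\{0,1\}\times\mathbb{C}$ ($\mathbb{C}\subset\mathbb{R}_{\ge0}$ finite; an input $x=(g,r,c)$ is group, recommended decision, intervention cost), output space $\mathcal{Y}=\{0,1\}$, input distribution $\theta\in\mathcal{D}(\mathcal{X})$, bias threshold $\kappa$. A shield is $\pi:(\mathcal{X}\times\mathcal{Y})^*\times\mathcal{X}\to\mathcal{Y}$, and $\Pi^T$ the shields defined on $(\mathcal{X}\times\mathcal{Y})^{\le T}\times\mathcal{X}$. $\mathtt{FT}^t_{\theta,\pi}$: traces $(x_1,y_1)\dots(x_t,y_t)$ with $\theta(x_i)>0$ and $y_i=\pi((x_1,y_1)\dots(x_{i-1},y_{i-1}),x_i)$. $\mathit{cost}(\tau)=\sum c_i\mathbb{1}[r_i\ne y_i]$, $\mathbb{E}[\mathit{cost};\theta,\pi,T]=\sum_{\tau\in(\mathcal{X}\times\mathcal{Y})^T}\mathit{cost}(\tau)\prod\theta(x_i)\mathbb{1}[\tau\in\mathtt{FT}^T_{\theta,\pi}]$. A statistic is single-counter if it maps traces to $\mathbb{N}$, additive if $\mu(\tau\tau')=\mu(\tau)+\mu(\tau')$.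 $\psi$ is DoR if for each group $g$ the welfare is $\mathtt{WF}^g(\tau)=\mathtt{num}^g(\tau)/\mathtt{den}^g(\tau)$ with $\mathtt{num}^g,\mathtt{den}^g$ additive single-counter statistics, and $\psi(\tau)=|\mathtt{WF}^a(\tau)-\mathtt{WF}^b(\tau)|$ (with $\psi=0$ if a welfare is undefined). A finite-horizon (FinHzn) shield for horizon $T$ is $\pi^*\in\arg\min_{\pi\in\Pi_{\mathtt{fair}}^{\theta,T}}\mathbb{E}[\mathit{cost};\theta,\pi,T]$ with $\Pi_{\mathtt{fair}}^{\theta,T}=\{\pi\in\Pi^T:\forall\tau\in\mathtt{FT}^T_{\theta,\pi},\psi(\tau)\le\kappa\}$. The concatenation of shields $\pi_1,\pi_2,\dots\in\Pi^T$ is the shield $\pi$ with $\pi(\tau\tau',x)=\pi_{j+1}(\tau',x)$ whenever $|\tau|=jT$ and $|\tau'|<T$. A Static-Fair shield is the concatenation of infinitely many copies of one FinHzn shield. *)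

theory Defs
  imports "HOL-Probability.Probability"
begin

datatype grp = GA | GB

text \<open>Input x = (g, r, c): group, recommended decision (0/1 as bool), intervention cost.
  Output y in {0,1} rendered as bool.\<close>
type_synonym input = "grp \<times> bool \<times> real"
type_synonym trace = "(input \<times> bool) list"
type_synonym shield = "trace \<Rightarrow> input \<Rightarrow> bool"

definition FT :: "input pmf \<Rightarrow> shield \<Rightarrow> nat \<Rightarrow> trace set" where
  "FT \<theta> \<pi> t = {\<tau>. length \<tau> = t \<and>
      (\<forall>i<t. pmf \<theta> (fst (\<tau>!i)) > 0 \<and> snd (\<tau>!i) = \<pi> (take i \<tau>) (fst (\<tau>!i)))}"

definition cost :: "trace \<Rightarrow> real" where
  "cost \<tau> = (\<Sum>i<length \<tau>. (let ((g,r,c),y) = \<tau>!i in if r \<noteq> y then c else 0))"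

text \<open>Expected cost; the indicator restricts the sum to feasible traces (a finite set
  when the support of theta is finite).\<close>
definition expected_cost :: "input pmf \<Rightarrow> shield \<Rightarrow> nat \<Rightarrow> real" where
  "expected_cost \<theta> \<pi> T =
     (\<Sum>\<tau>\<in>FT \<theta> \<pi> T. cost \<tau> * (\<Prod>i<length \<tau>. pmf \<theta> (fst (\<tau>!i))))"

definition additive :: "(trace \<Rightarrow> nat) \<Rightarrow> bool" where
  "additive \<mu> \<longleftrightarrow> (\<forall>\<tau> \<tau>'. \<mu> (\<tau> @ \<tau>') = \<mu> \<tau> + \<mu> \<tau>')"

definition welfare :: "(grp \<Rightarrow> trace \<Rightarrow> nat) \<Rightarrow> (grp \<Rightarrow> trace \<Rightarrow> nat) \<Rightarrow> grp \<Rightarrow> trace \<Rightarrow> real" where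
  "welfare num den g \<tau> = real (num g \<tau>) / real (den g \<tau>)"

text \<open>Difference-of-ratios property; 0 if some welfare is undefined (denominator 0).\<close>
definition dor_psi :: "(grp \<Rightarrow> trace \<Rightarrow> nat) \<Rightarrow> (grp \<Rightarrow> trace \<Rightarrow> nat) \<Rightarrow> trace \<Rightarrow> real" where
  "dor_psi num den \<tau> =
     (if den GA \<tau> = 0 \<or> den GB \<tau> = 0 then 0
      else \<bar>welfare num den GA \<tau> - welfare num den GB \<tau>\<bar>)"

definition fair_shields :: "input pmf \<Rightarrow> (trace \<Rightarrow> real) \<Rightarrow> real \<Rightarrow> nat \<Rightarrow> shield set" where
  "fair_shields \<theta> \<psi> \<kappa> T = {\<pi>. \<forall>\<tau>\<in>FT \<theta> \<pi> T. \<psi> \<tau> \<le> \<kappa>}"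

definition finhzn_shield :: "input pmf \<Rightarrow> (trace \<Rightarrow> real) \<Rightarrow> real \<Rightarrow> nat \<Rightarrow> shield \<Rightarrow> bool" where
  "finhzn_shield \<theta> \<psi> \<kappa> T \<pi>s \<longleftrightarrow>
     \<pi>s \<in> fair_shields \<theta> \<psi> \<kappa> T \<and>
     (\<forall>\<pi>\<in>fair_shields \<theta> \<psi> \<kappa> T. expected_cost \<theta> \<pi>s T \<le> expected_cost \<theta> \<pi> T)"

text \<open>Concatenation of shields pi_1, pi_2, ... (indexed from 0 here):
  pi(tau tau', x) = pi_{j+1}(tau', x) when |tau| = jT, |tau'| < T.\<close>
definition concat_shields :: "nat \<Rightarrow> (nat \<Rightarrow> shield) \<Rightarrow> shield" where
  "concat_shields T \<pi>s \<tau> x =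
     \<pi>s (length \<tau> div T) (drop ((length \<tau> div T) * T) \<tau>) x"

definition static_fair_shield :: "input pmf \<Rightarrow> (trace \<Rightarrow> real) \<Rightarrow> real \<Rightarrow> nat \<Rightarrow> shield \<Rightarrow> bool" where
  "static_fair_shield \<theta> \<psi> \<kappa> T \<pi> \<longleftrightarrow>
     (\<exists>\<pi>s. finhzn_shield \<theta> \<psi> \<kappa> T \<pi>s \<and> \<pi> = concat_shields T (\<lambda>_. \<pi>s))"

end

theory Submission
  imports Defs
begin

text \<open>Every length-\<open>T\<close> block of a trace produced by a Static-Fair shield is a trace of the
  underlying FinHzn shield, so it satisfies \<open>\<psi> \<le> \<kappa>\<close>. By additivity, numerator and
  denominator of the whole trace are sums over the blocks; since each group has the same
  denominator \<open>d\<^sub>g\<close> on every block, the welfare of the whole trace is the average of the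
  block welfares. The absolute difference of two averages is at most the average of the
  absolute differences, hence at most \<open>\<kappa>\<close>.\<close>

lemma FT_cong:
  assumes "\<And>\<tau> x. length \<tau> < n \<Longrightarrow> \<pi> \<tau> x = \<pi>' \<tau> x"
  shows "FT \<theta> \<pi> n = FT \<theta> \<pi>' n"
  using assms unfolding FT_def by (auto simp: min_def)

lemma all_less_add_split:
  "(\<forall>i::nat < n + k. P i) \<longleftrightarrow> (\<forall>i < n. P i) \<and> (\<forall>i < k. P (n + i))"
proof
  assume "(\<forall>i < n. P i) \<and> (\<forall>i < k. P (n + i))"
  then show "\<forall>i < n + k. P i"
    by (metis add_diff_inverse_nat add_less_cancel_left)
qed simp

lemma FT_append_iff:
  "xs @ ys \<in> FT \<theta> \<pi> (length xs + length ys) \<longleftrightarrow>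
     xs \<in> FT \<theta> \<pi> (length xs) \<and> ys \<in> FT \<theta> (\<lambda>\<tau>. \<pi> (xs @ \<tau>)) (length ys)"
  unfolding FT_def by (simp add: all_less_add_split nth_append)

lemma FT_nonempty: "FT \<theta> \<pi> n \<noteq> {}"
proof -
  obtain x where "x \<in> set_pmf \<theta>"
    using set_pmf_not_empty by fastforce
  then have x_pos: "pmf \<theta> x > 0"
    by (simp add: pmf_positive)
  have "\<exists>\<tau>. \<tau> \<in> FT \<theta> \<pi> k" for k
  proof (induction k)
    case 0
    show ?case by (auto simp: FT_def)
  next
    case (Suc k)
    then obtain \<tau> where \<tau>: "\<tau> \<in> FT \<theta> \<pi> k" by blast
    then have "length \<tau> = k" by (simp add: FT_def)
    then have "\<tau> @ [(x, \<pi> \<tau> x)] \<in> FT \<theta> \<pi> (Suc k)"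
      using FT_append_iff[of \<tau> "[(x, \<pi> \<tau> x)]"] \<tau> x_pos by (simp add: FT_def)
    then show ?case by blast
  qed
  then show ?thesis by blast
qed

lemma concat_shields_append_block:
  assumes "length xs = j * T" "length \<tau> < T"
  shows "concat_shields T \<pi>s (xs @ \<tau>) = \<pi>s j \<tau>"
proof -
  have "(j * T + length \<tau>) div T = j"
    using assms(2) by simp
  then show ?thesis
    using assms by (auto simp: concat_shields_def)
qed

lemma length_concat_blocks:
  "\<forall>b\<in>set bs. length b = T \<Longrightarrow> length (concat bs) = length bs * T"
  by (induction bs) auto

lemma FT_concat_shields_blocks:
  assumes "\<forall>b\<in>set bs. length b = T"
    and "concat bs \<in> FT \<theta> (concat_shields T \<pi>s) (length bs * T)"
    and "i < length bs"
  shows "bs ! i \<in> FT \<theta> (\<pi>s i) T"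
  using assms
proof (induction bs arbitrary: i rule: rev_induct)
  case Nil
  then show ?case by simp
next
  case (snoc b bs)
  have len_bs: "length (concat bs) = length bs * T" and len_b: "length b = T"
    using snoc.prems(1) length_concat_blocks by auto
  have "concat bs @ b \<in> FT \<theta> (concat_shields T \<pi>s) (length (concat bs) + length b)"
    using snoc.prems(2) len_bs len_b by (simp add: add.commute)
  then have prefix: "concat bs \<in> FT \<theta> (concat_shields T \<pi>s) (length bs * T)"
    and last_block: "b \<in> FT \<theta> (\<lambda>\<tau>. concat_shields T \<pi>s (concat bs @ \<tau>)) T"
    unfolding FT_append_iff using len_bs len_b by auto
  show ?case
  proof (cases "i < length bs")
    case True
    then show ?thesis
      using snoc.IH snoc.prems(1) prefix by (simp add: nth_append)
  next
    case False
    then have "i = length bs"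
      using snoc.prems(3) by simp
    moreover have "FT \<theta> (\<lambda>\<tau>. concat_shields T \<pi>s (concat bs @ \<tau>)) T = FT \<theta> (\<pi>s (length bs)) T"
      by (rule FT_cong) (simp add: concat_shields_append_block[OF len_bs])
    ultimately show ?thesis
      using last_block by simp
  qed
qed

lemma additive_concat:
  assumes "additive f"
  shows "f (concat bs) = (\<Sum>b\<leftarrow>bs. f b)"
proof (induction bs)
  case Nil
  have "f [] = f [] + f []"
    using assms unfolding additive_def by (metis append_Nil)
  then show ?case by simp
next
  case (Cons b bs)
  then show ?case
    using assms unfolding additive_def by simp
qed

lemma dor_psi_nonneg: "dor_psi num den \<tau> \<ge> 0"
  unfolding dor_psi_def by auto

lemma additive_concat_equal:
  assumes "additive f" and "\<forall>b\<in>set bs. f b = d"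
  shows "f (concat bs) = length bs * d"
proof -
  have "f (concat bs) = (\<Sum>b\<leftarrow>bs. d)"
    using assms(2) by (simp add: additive_concat[OF assms(1)] cong: map_cong)
  then show ?thesis
    by (simp add: sum_list_triv)
qed

text \<open>The case \<open>d = 0\<close> is included: both sides are then \<open>0\<close> by the convention \<open>x / 0 = 0\<close>.\<close>
lemma welfare_concat_equal_den:
  assumes "additive (num g)" "additive (den g)"
    and "\<forall>b\<in>set bs. den g b = d"
  shows "welfare num den g (concat bs) = (\<Sum>b\<leftarrow>bs. welfare num den g b) / length bs"
proof -
  have "(\<Sum>b\<leftarrow>bs. welfare num den g b) = (\<Sum>b\<leftarrow>bs. real (num g b) * inverse d)"
    using assms(3) by (simp add: welfare_def divide_inverse cong: map_cong)
  also have "\<dots> = real (num g (concat bs)) * inverse d"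
    by (simp add: sum_list_mult_const additive_concat[OF assms(1)] o_def flip: sum_list_of_nat)
  finally show ?thesis
    by (simp add: welfare_def additive_concat_equal[OF assms(2,3)] divide_inverse mult_ac)
qed

lemma abs_average_diff_le:
  fixes f h :: "'a \<Rightarrow> real"
  assumes "xs \<noteq> []" and "\<forall>x\<in>set xs. \<bar>f x - h x\<bar> \<le> \<kappa>"
  shows "\<bar>(\<Sum>x\<leftarrow>xs. f x) / length xs - (\<Sum>x\<leftarrow>xs. h x) / length xs\<bar> \<le> \<kappa>"
proof -
  have "\<bar>(\<Sum>x\<leftarrow>xs. f x) / length xs - (\<Sum>x\<leftarrow>xs. h x) / length xs\<bar>
      = \<bar>\<Sum>x\<leftarrow>xs. f x - h x\<bar> / length xs"
    by (simp add: diff_divide_distrib[symmetric] sum_list_subtractf)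
  also have "\<dots> \<le> (\<Sum>x\<leftarrow>xs. \<bar>f x - h x\<bar>) / length xs"
    by (rule divide_right_mono) (use sum_list_abs[of "map (\<lambda>x. f x - h x) xs"] in \<open>simp_all add: o_def\<close>)
  also have "\<dots> \<le> (\<Sum>x\<leftarrow>xs. \<kappa>) / length xs"
    by (intro divide_right_mono sum_list_mono) (use assms(2) in auto)
  also have "\<dots> = \<kappa>"
    using assms(1) by (simp add: sum_list_triv)
  finally show ?thesis .
qed

lemma dor_psi_concat_le:
  assumes "\<forall>g. additive (num g) \<and> additive (den g)"
    and equal_den: "\<And>g b b'. b \<in> set bs \<Longrightarrow> b' \<in> set bs \<Longrightarrow> den g b = den g b'"
    and "\<forall>b\<in>set bs. dor_psi num den b \<le> \<kappa>" and "0 \<le> \<kappa>"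
  shows "dor_psi num den (concat bs) \<le> \<kappa>"
proof (cases bs)
  case Nil
  have "den g [] = 0" for g
    using assms(1) additive_concat[of "den g" "[]"] by simp
  then show ?thesis
    using Nil assms(4) by (simp add: dor_psi_def)
next
  case (Cons b\<^sub>0 _)
  define d where "d g = den g b\<^sub>0" for g
  have den_eq: "\<forall>b\<in>set bs. den g b = d g" for g
    using equal_den Cons unfolding d_def by (meson list.set_intros(1))
  have den_concat: "den g (concat bs) = length bs * d g" for g
    using additive_concat_equal den_eq assms(1) by blast
  show ?thesis
  proof (cases "d GA = 0 \<or> d GB = 0")
    case True
    then have "dor_psi num den (concat bs) = 0"
      using den_concat[of GA] den_concat[of GB] by (auto simp: dor_psi_def)
    then show ?thesis
      using assms(4) by simp
  next
    case False
    let ?w = "welfare num den"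
    have block_bound: "\<forall>b\<in>set bs. \<bar>?w GA b - ?w GB b\<bar> \<le> \<kappa>"
      using assms(3) den_eq False by (simp add: dor_psi_def)
    have "dor_psi num den (concat bs) = \<bar>?w GA (concat bs) - ?w GB (concat bs)\<bar>"
      using False Cons den_concat by (simp add: dor_psi_def)
    also have "\<dots> = \<bar>(\<Sum>b\<leftarrow>bs. ?w GA b) / length bs - (\<Sum>b\<leftarrow>bs. ?w GB b) / length bs\<bar>"
      using assms(1) welfare_concat_equal_den[OF _ _ den_eq] by simp
    also have "\<dots> \<le> \<kappa>"
      using abs_average_diff_le[OF _ block_bound] Cons by blast
    finally show ?thesis .
  qed
qed

theorem theorem6p2:
  fixes \<theta> :: "input pmf" and C :: "real set" and \<kappa> :: real and T m :: nat
    and num den :: "grp \<Rightarrow> trace \<Rightarrow> nat" and \<psi> :: "trace \<Rightarrow> real"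
    and \<pi> :: shield and \<tau> :: trace and \<tau>s :: "trace list"
  assumes "finite C" and "C \<subseteq> {0..}"
    and "set_pmf \<theta> \<subseteq> {(g, r, c). c \<in> C}"
    and "\<forall>g. additive (num g) \<and> additive (den g)"
    and "\<psi> = dor_psi num den"
    and "static_fair_shield \<theta> \<psi> \<kappa> T \<pi>"
    and "\<tau> \<in> FT \<theta> \<pi> (m * T)"
    and "length \<tau>s = m" and "\<tau> = concat \<tau>s" and "\<forall>b\<in>set \<tau>s. length b = T"
    and "\<forall>i<m. \<forall>j<m. \<forall>g. den g (\<tau>s ! i) = den g (\<tau>s ! j)"
  shows "\<psi> \<tau> \<le> \<kappa>"
proof -
  obtain \<pi>\<^sub>0 where finhzn: "finhzn_shield \<theta> \<psi> \<kappa> T \<pi>\<^sub>0"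
    and \<pi>_concat: "\<pi> = concat_shields T (\<lambda>_. \<pi>\<^sub>0)"
    using assms(6) unfolding static_fair_shield_def by blast
  have fair: "\<psi> t \<le> \<kappa>" if "t \<in> FT \<theta> \<pi>\<^sub>0 T" for t
    using finhzn that unfolding finhzn_shield_def fair_shields_def by blast
  \<comment> \<open>The hypotheses on \<open>C\<close> only make expected costs meaningful.
    \<open>0 \<le> \<kappa>\<close> is needed for \<open>m = 0\<close> and follows from fairness on any feasible trace.\<close>
  have "0 \<le> \<kappa>"
    using FT_nonempty[of \<theta> \<pi>\<^sub>0 T] fair dor_psi_nonneg assms(5) by (metis ex_in_conv order_trans)
  moreover have "\<forall>b\<in>set \<tau>s. \<psi> b \<le> \<kappa>"
    using FT_concat_shields_blocks[of \<tau>s T \<theta> "\<lambda>_. \<pi>\<^sub>0"] assms(7-10) \<pi>_concat fair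
    by (auto simp: in_set_conv_nth)
  moreover have "den g b = den g b'" if "b \<in> set \<tau>s" "b' \<in> set \<tau>s" for g b b'
    using that assms(8,11) by (auto simp: in_set_conv_nth)
  ultimately show ?thesis
    using dor_psi_concat_le[of num den \<tau>s \<kappa>] assms(4,5,9) by blast
qed

end
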